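(* For any prime $p>3$, $$\binom{\frac12p-1}{p-1}\binom{2p-1}{p-1}\equiv 1-\frac7{12}p^3B_{p-3}\pmod{p^4}.$$
   Context: For rational $x$ and integer $n\ge0$, $\binom{x}{n}=\frac{x(x-1)\cdots(x-n+1)}{n!}$. $B_0,B_1,\dots$ are the Bernoulli numbers. A congruence $a\equiv b\pmod{p^m}$ between rational numbers means that $(a-b)/p^m$ is a rational number whose denominator is not divisible by $p$. *)

theory Defs
  imports Complex_Main "HOL-Computational_Algebra.Primes"
begin

text \<open>Bernoulli numbers B_0, B_1, ... with B_0 = 1 and
  sum_{k=0}^{n} C(n+1,k) B_k = 0 for n \<ge> 1 (so B_1 = -1/2).\<close>
fun bernoulli :: "nat \<Rightarrow> rat" where
  "bernoulli n = (if n = 0 then 1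
     else - (\<Sum>k<n. of_nat ((n + 1) choose k) * bernoulli k) / of_nat (n + 1))"

definition rat_cong_pow :: "rat \<Rightarrow> rat \<Rightarrow> nat \<Rightarrow> nat \<Rightarrow> bool" where
  "rat_cong_pow a b p m \<longleftrightarrow>
     \<not> (int p dvd snd (quotient_of ((a - b) / (of_nat p ^ m))))"

end

theory Submission
  imports Defs "HOL-Number_Theory.Residues"
begin

(*
  Writing both binomial coefficients as products over 0 < k < p gives
    ((p/2 - 1) gchoose (p - 1)) * ((2p - 1) choose (p - 1)) = prod (1 - p/(2k)) * prod (1 - 2p/k),
  and for every p-integral t one has prod (1 - tp/k) = 1 + t(1 - t)/3 * p^3 B_{p-3} (mod p^4),
  so that t = 1/2 and t = 2 contribute the factors 1 + p^3 B_{p-3}/12 and 1 - 2p^3 B_{p-3}/3.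
  Expanding the product to third order in the sums H_r = sum 1/k^r reduces that congruence to
    2 H_1 + p H_2 = 0 (mod p^3),   3 H_2 = 2p B_{p-3} (mod p^2),   H_3 = 0 (mod p).
  The first and the last follow by pairing k with p - k. For the middle one, writing the odd
  k < p as 2j - p relates H_2 to the sum of 1/j^3 = j^(p-4) (mod p) over p/2 < j < p; the same
  substitution in Faulhaber's congruence sum_{k<p} k^(p-3) = p B_{p-3} (mod p^2) shows that this
  half sum is 2 B_{p-3} modulo p.
*)

section \<open>Bernoulli numbers and sums of powers\<close>

declare bernoulli.simps [simp del]

lemma of_nat_Suc_mult_bernoulli:
  "0 < n \<Longrightarrow> of_nat (Suc n) * bernoulli n = - (\<Sum>k<n. of_nat (Suc n choose k) * bernoulli k)"
  by (subst bernoulli.simps) (simp del: of_nat_Suc)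

lemma bernoulli_recurrence:
  "(\<Sum>k\<le>n. of_nat (Suc n choose k) * bernoulli k) = (if n = 0 then 1 else 0)"
  using of_nat_Suc_mult_bernoulli[of n]
  by (cases "n = 0") (simp_all add: bernoulli.simps lessThan_Suc_atMost[symmetric])

lemma fact_mult_bernoulli_in_Ints: "fact (Suc n) * bernoulli n \<in> \<int>"
proof (induction n rule: less_induct)
  case (less n)
  show ?case
  proof (cases "n = 0")
    case True
    then show ?thesis
      by (simp add: bernoulli.simps)
  next
    case False
    have fact_split: "(fact n :: rat) = of_nat (fact n div fact (Suc k)) * fact (Suc k)"
      if "k < n" for k
    proof -
      have "fact (Suc k) dvd (fact n :: nat)"
        using that by (intro fact_dvd) simp
      then show ?thesis
        by (metis dvd_div_mult_self of_nat_fact of_nat_mult)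
    qed
    have "fact (Suc n) * bernoulli n = fact n * (of_nat (Suc n) * bernoulli n)"
      by (simp add: algebra_simps)
    also have "of_nat (Suc n) * bernoulli n = - (\<Sum>k<n. of_nat (Suc n choose k) * bernoulli k)"
      using False by (simp add: of_nat_Suc_mult_bernoulli del: of_nat_Suc)
    also have "fact n * \<dots> = - (\<Sum>k<n. of_nat ((Suc n choose k) * (fact n div fact (Suc k)))
                                   * (fact (Suc k) * bernoulli k))"
      by (simp add: sum_distrib_left fact_split mult_ac del: of_nat_fact fact_Suc)
    also have "\<dots> \<in> \<int>"
      using less by (intro Ints_minus Ints_sum Ints_mult[OF Ints_of_nat]) simp
    finally show ?thesis .
  qed
qed

lemma choose_mult_swap:
  "i + j \<le> n \<Longrightarrow> (n choose j) * ((n - j) choose i) = (n choose i) * ((n - i) choose j)"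
  using choose_mult[of j "i + j" n] choose_mult[of i "i + j" n] binomial_symmetric[of j "i + j"]
  by simp

lemma sum_triangle_swap:
  fixes f :: "nat \<Rightarrow> nat \<Rightarrow> 'a::comm_monoid_add"
  shows "(\<Sum>j\<le>m. \<Sum>i\<le>m - j. f i j) = (\<Sum>i\<le>m. \<Sum>j\<le>m - i. f i j)"
proof -
  have "\<And>j. j \<le> m \<Longrightarrow> {..m - j} = {i. i \<in> {..m} \<and> i + j \<le> m}"
    by auto
  then have "(\<Sum>j\<le>m. \<Sum>i\<le>m - j. f i j) = (\<Sum>j\<le>m. \<Sum>i\<in>{i. i \<in> {..m} \<and> i + j \<le> m}. f i j)"
    by (intro sum.cong) auto
  also have "\<dots> = (\<Sum>i\<le>m. \<Sum>j\<in>{j. j \<in> {..m} \<and> i + j \<le> m}. f i j)"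
    by (rule sum.swap_restrict) simp_all
  also have "\<dots> = (\<Sum>i\<le>m. \<Sum>j\<le>m - i. f i j)"
    by (intro sum.cong) auto
  finally show ?thesis .
qed

lemma power_add_one_diff:
  "(x + 1) ^ n - x ^ n = (\<Sum>i<n. of_nat (n choose i) * (x :: 'a::comm_ring_1) ^ i)"
  using binomial_ring[of x 1 n] by (simp add: lessThan_Suc_atMost[symmetric])

lemma bernoulli_sum_diff:
  "(\<Sum>j\<le>m. of_nat (Suc m choose j) * bernoulli j * ((x + 1) ^ (Suc m - j) - x ^ (Suc m - j)))
     = of_nat (Suc m) * x ^ m"
proof -
  have "(\<Sum>j\<le>m. of_nat (Suc m choose j) * bernoulli j * ((x + 1) ^ (Suc m - j) - x ^ (Suc m - j)))
      = (\<Sum>j\<le>m. \<Sum>i\<le>m - j. of_nat ((Suc m choose j) * (Suc m - j choose i)) * bernoulli j * x ^ i)"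
  proof (intro sum.cong refl)
    fix j assume "j \<in> {..m}"
    then have "{..<Suc m - j} = {..m - j}"
      by auto
    then show "of_nat (Suc m choose j) * bernoulli j * ((x + 1) ^ (Suc m - j) - x ^ (Suc m - j))
        = (\<Sum>i\<le>m - j. of_nat ((Suc m choose j) * (Suc m - j choose i)) * bernoulli j * x ^ i)"
      by (simp add: power_add_one_diff sum_distrib_left mult_ac)
  qed
  also have "\<dots> = (\<Sum>i\<le>m. \<Sum>j\<le>m - i. of_nat ((Suc m choose j) * (Suc m - j choose i)) * bernoulli j * x ^ i)"
    by (rule sum_triangle_swap)
  also have "\<dots> = (\<Sum>i\<le>m. of_nat (Suc m choose i) * x ^ i
                       * (\<Sum>j\<le>m - i. of_nat (Suc (m - i) choose j) * bernoulli j))"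
  proof (intro sum.cong refl)
    fix i assume "i \<in> {..m}"
    then have "(Suc m choose j) * (Suc m - j choose i) = (Suc m choose i) * (Suc (m - i) choose j)"
      if "j \<le> m - i" for j
      using that choose_mult_swap[of i j "Suc m"] by (simp add: Suc_diff_le)
    then show "(\<Sum>j\<le>m - i. of_nat ((Suc m choose j) * (Suc m - j choose i)) * bernoulli j * x ^ i)
        = of_nat (Suc m choose i) * x ^ i * (\<Sum>j\<le>m - i. of_nat (Suc (m - i) choose j) * bernoulli j)"
      by (simp add: sum_distrib_left mult_ac)
  qed
  also have "\<dots> = of_nat (Suc m) * x ^ m"
    by (simp add: bernoulli_recurrence if_distrib cong: if_cong)
  finally show ?thesis .
qed

lemma sum_powers_bernoulli:
  "of_nat (Suc m) * (\<Sum>k<n. of_nat k ^ m)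
     = (\<Sum>j\<le>m. of_nat (Suc m choose j) * bernoulli j * of_nat n ^ (Suc m - j))"
proof (induction n)
  case 0
  show ?case
    by (simp add: sum.neutral)
next
  case (Suc n)
  have "of_nat (Suc m) * (\<Sum>k<Suc n. of_nat k ^ m)
      = of_nat (Suc m) * (\<Sum>k<n. of_nat k ^ m) + of_nat (Suc m) * of_nat n ^ m"
    by (simp add: distrib_left)
  also have "\<dots> = (\<Sum>j\<le>m. of_nat (Suc m choose j) * bernoulli j * of_nat n ^ (Suc m - j))
      + (\<Sum>j\<le>m. of_nat (Suc m choose j) * bernoulli j
           * ((of_nat n + 1) ^ (Suc m - j) - of_nat n ^ (Suc m - j)))"
    by (simp only: Suc bernoulli_sum_diff)
  also have "\<dots> = (\<Sum>j\<le>m. of_nat (Suc m choose j) * bernoulli j * of_nat (Suc n) ^ (Suc m - j))"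
    by (simp add: sum.distrib[symmetric] algebra_simps)
  finally show ?case .
qed

section \<open>Sums over half ranges and binomial products\<close>

lemma sum_odd_range_by_halves:
  fixes f :: "nat \<Rightarrow> 'a::comm_monoid_add"
  assumes "odd p"
  shows "(\<Sum>j\<in>{1..<p}. f j) = (\<Sum>k\<in>{1..p div 2}. f (2 * k)) + (\<Sum>k\<in>{p div 2<..<p}. f (2 * k - p))"
proof -
  define h where "h = p div 2"
  have p: "p = 2 * h + 1"
    using assms unfolding h_def by presburger
  have "(\<Sum>j\<in>{1..<p}. f j) = (\<Sum>j\<in>{j\<in>{1..<p}. even j}. f j) + (\<Sum>j\<in>{j\<in>{1..<p}. odd j}. f j)"
    by (subst sum.union_disjoint[symmetric]) (auto intro!: sum.cong)
  moreover have "(\<Sum>k\<in>{1..h}. f (2 * k)) = (\<Sum>j\<in>{j\<in>{1..<p}. even j}. f j)"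
    by (rule sum.reindex_bij_witness[where i = "\<lambda>j. j div 2" and j = "\<lambda>k. 2 * k"]) (auto simp: p)
  moreover have "(\<Sum>k\<in>{h<..<p}. f (2 * k - p)) = (\<Sum>j\<in>{j\<in>{1..<p}. odd j}. f j)"
    by (rule sum.reindex_bij_witness[where i = "\<lambda>j. (j + p) div 2" and j = "\<lambda>k. 2 * k - p"])
      (auto simp: p elim!: oddE)
  ultimately show ?thesis
    by (simp add: h_def)
qed

definition inv_power_sum :: "nat \<Rightarrow> nat \<Rightarrow> rat" where
  "inv_power_sum p r = (\<Sum>k\<in>{1..<p}. 1 / of_nat k ^ r)"

lemma inv_power_sum_reflect:
  "2 * inv_power_sum p r = (\<Sum>k\<in>{1..<p}. 1 / of_nat k ^ r + 1 / of_nat (p - k) ^ r)"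
  using sum.atLeastLessThan_rev[of "\<lambda>k. 1 / of_nat k ^ r :: rat" 1 p]
  by (simp add: inv_power_sum_def sum.distrib)

lemma inv_power_sum_2_halves:
  assumes "odd p"
  shows "3 * inv_power_sum p 2 = of_nat p * (\<Sum>k\<in>{p div 2<..<p}. 1 / of_nat k ^ 3)
           + of_nat p ^ 2 * (\<Sum>k\<in>{p div 2<..<p}. (of_nat k + of_nat (2 * k - p))
                                * (1 / of_nat k ^ 3) * (1 / of_nat (2 * k - p) ^ 2))"
proof -
  define h where "h = p div 2"
  \<comment> \<open>The expansion of 4/(2x - q)^2 to second order in q, written with y = 2x - q.\<close>
  have expand: "4 / y ^ 2 = 1 / x ^ 2 + (2 * x - y) / x ^ 3 + (2 * x - y) ^ 2 * ((x + y) * (1 / x ^ 3) * (1 / y ^ 2))"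
    if "x \<noteq> 0" "y \<noteq> 0" for x y :: rat
    using that by (simp add: field_simps power2_eq_square power3_eq_cube) algebra
  have "4 / of_nat (2 * k - p) ^ 2 = 1 / of_nat k ^ 2 + of_nat p * (1 / of_nat k ^ 3)
      + of_nat p ^ 2 * ((of_nat k + of_nat (2 * k - p)) * (1 / of_nat k ^ 3) * (1 / of_nat (2 * k - p) ^ 2) :: rat)"
    if "k \<in> {h<..<p}" for k
  proof -
    have "2 * of_nat k - of_nat (2 * k - p) = (of_nat p :: rat)"
      using that assms by (auto simp: h_def of_nat_diff)
    moreover have "(of_nat k :: rat) \<noteq> 0" "(of_nat (2 * k - p) :: rat) \<noteq> 0"
      using that assms by (auto simp: h_def)
    ultimately show ?thesis
      using expand[of "of_nat k" "of_nat (2 * k - p)"] by simp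
  qed
  then have "4 * inv_power_sum p 2 = (\<Sum>k\<in>{1..h}. 1 / of_nat k ^ 2) + (\<Sum>k\<in>{h<..<p}. 1 / of_nat k ^ 2)
      + of_nat p * (\<Sum>k\<in>{h<..<p}. 1 / of_nat k ^ 3)
      + of_nat p ^ 2 * (\<Sum>k\<in>{h<..<p}. (of_nat k + of_nat (2 * k - p)) * (1 / of_nat k ^ 3)
                          * (1 / of_nat (2 * k - p) ^ 2))"
    unfolding inv_power_sum_def h_def sum_odd_range_by_halves[OF assms]
    by (simp add: distrib_left sum_distrib_left sum.distrib h_def)
  moreover have "{1..<p} = {1..h} \<union> {h<..<p}" "{1..h} \<inter> {h<..<p} = {}"
    using assms by (auto simp: h_def)
  ultimately show ?thesis
    unfolding inv_power_sum_def h_def by (simp add: sum.union_disjoint)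
qed

lemma gbinomial_pred_eq_prod:
  fixes a :: "'a :: field_char_0"
  shows "(a - 1) gchoose n = (- 1) ^ n * (\<Prod>k = 1..n. 1 - a / of_nat k)"
proof -
  have "pochhammer (1 - a) n / fact n = (\<Prod>k = 1..n. 1 - a / of_nat k)"
  proof (induction n)
    case (Suc n)
    have "pochhammer (1 - a) (Suc n) / fact (Suc n)
        = pochhammer (1 - a) n / fact n * ((1 - a + of_nat n) / of_nat (Suc n))"
      by (simp add: pochhammer_Suc field_simps del: of_nat_Suc)
    also have "(1 - a + of_nat n) / of_nat (Suc n) = 1 - a / of_nat (Suc n)"
      using of_nat_neq_0[of n, where 'a = 'a] by (simp add: field_simps)
    finally show ?case
      by (simp add: Suc)
  qed simp
  then show ?thesis
    by (simp add: gbinomial_pochhammer flip: times_divide_eq_right)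
qed

lemma binomial_product_eq_prod:
  assumes "0 < n"
  shows "((of_nat n / 2 - 1 :: rat) gchoose (n - 1)) * of_nat ((2 * n - 1) choose (n - 1))
           = (\<Prod>k\<in>{1..<n}. 1 - 1 / 2 * of_nat n / of_nat k) * (\<Prod>k\<in>{1..<n}. 1 - 2 * of_nat n / of_nat k)"
proof -
  have "of_nat ((2 * n - 1) choose (n - 1)) = (2 * of_nat n - 1 :: rat) gchoose (n - 1)"
    using assms by (simp add: binomial_gbinomial of_nat_diff)
  moreover have "{1..n - 1} = {1..<n}"
    using assms by auto
  ultimately show ?thesis
    by (simp add: gbinomial_pred_eq_prod mult_ac)
qed

(* The truncation 1 + e_1 + e_2 + e_3 of the sum of all elementary symmetric polynomials of
   some numbers c_k, written by Newton's identities in terms of the power sums sum c_k^j. *)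
definition esym_upto_3 :: "rat \<Rightarrow> rat \<Rightarrow> rat \<Rightarrow> rat" where
  "esym_upto_3 s1 s2 s3 = 1 + s1 + (s1 ^ 2 - s2) / 2 + (s1 ^ 3 - 3 * s1 * s2 + 2 * s3) / 6"

lemma esym_upto_3_insert:
  "esym_upto_3 (c + s1) (c ^ 2 + s2) (c ^ 3 + s3)
     = (1 + c) * esym_upto_3 s1 s2 s3 - c * ((s1 ^ 3 - 3 * s1 * s2 + 2 * s3) / 6)"
  unfolding esym_upto_3_def by (simp add: field_simps power2_eq_square power3_eq_cube) algebra

section \<open>Rationals that are integral at p\<close>

definition p_integral :: "nat \<Rightarrow> rat \<Rightarrow> bool" where
  "p_integral p x \<longleftrightarrow> (\<exists>a b. \<not> int p dvd b \<and> x = of_int a / of_int b)"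

definition ppow_dvd :: "nat \<Rightarrow> nat \<Rightarrow> rat \<Rightarrow> bool" where
  "ppow_dvd p m x \<longleftrightarrow> (\<exists>y. p_integral p y \<and> x = of_nat p ^ m * y)"

context
  fixes p :: nat
  assumes prime_p: "prime p"
begin

lemma p_integral_of_int [simp]: "p_integral p (of_int a)"
  unfolding p_integral_def using prime_gt_1_nat[OF prime_p]
  by (rule_tac exI[of _ a], rule_tac exI[of _ 1]) simp

lemma p_integral_of_nat [simp]: "p_integral p (of_nat n)"
  using p_integral_of_int[of "int n"] by simp

lemma p_integral_numeral [simp]: "p_integral p (numeral n)"
  using p_integral_of_int[of "numeral n"] by simp

lemma p_integral_0 [simp]: "p_integral p 0" and p_integral_1 [simp]: "p_integral p 1"
  using p_integral_of_int[of 0] p_integral_of_int[of 1] by simp_all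

lemma p_integral_minus:
  assumes "p_integral p x"
  shows "p_integral p (- x)"
proof -
  obtain a b where "\<not> int p dvd b" "x = of_int a / of_int b"
    using assms p_integral_def by auto
  then show ?thesis
    unfolding p_integral_def by (intro exI[of _ "- a"] exI[of _ b]) simp
qed

lemma p_integral_add:
  assumes "p_integral p x" "p_integral p y"
  shows "p_integral p (x + y)"
proof -
  obtain a b where ab: "\<not> int p dvd b" "x = of_int a / of_int b"
    using assms(1) p_integral_def by auto
  obtain c d where cd: "\<not> int p dvd d" "y = of_int c / of_int d"
    using assms(2) p_integral_def by auto
  have "\<not> int p dvd b * d"
    using ab(1) cd(1) prime_p by (simp add: prime_dvd_mult_iff)
  moreover have "b \<noteq> 0" "d \<noteq> 0"
    using ab(1) cd(1) by auto
  then have "x + y = of_int (a * d + c * b) / of_int (b * d)"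
    using ab cd by (simp add: field_simps)
  ultimately show ?thesis
    unfolding p_integral_def by blast
qed

lemma p_integral_mult:
  assumes "p_integral p x" "p_integral p y"
  shows "p_integral p (x * y)"
proof -
  obtain a b where ab: "\<not> int p dvd b" "x = of_int a / of_int b"
    using assms(1) p_integral_def by auto
  obtain c d where cd: "\<not> int p dvd d" "y = of_int c / of_int d"
    using assms(2) p_integral_def by auto
  have "\<not> int p dvd b * d"
    using ab(1) cd(1) prime_p by (simp add: prime_dvd_mult_iff)
  moreover have "x * y = of_int (a * c) / of_int (b * d)"
    using ab cd by simp
  ultimately show ?thesis
    unfolding p_integral_def by blast
qed

lemma p_integral_diff: "p_integral p x \<Longrightarrow> p_integral p y \<Longrightarrow> p_integral p (x - y)"
  using p_integral_add[of x "- y"] p_integral_minus[of y] by simp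

lemma p_integral_power: "p_integral p x \<Longrightarrow> p_integral p (x ^ n)"
  by (induction n) (simp_all add: p_integral_mult)

lemma p_integral_sum: "(\<And>i. i \<in> A \<Longrightarrow> p_integral p (f i)) \<Longrightarrow> p_integral p (\<Sum>i\<in>A. f i)"
  by (induction A rule: infinite_finite_induct) (simp_all add: p_integral_add)

lemma p_integral_divide:
  assumes "p_integral p x" "\<not> p dvd b"
  shows "p_integral p (x / of_nat b)"
proof -
  obtain a c where ac: "\<not> int p dvd c" "x = of_int a / of_int c"
    using assms(1) p_integral_def by auto
  have "\<not> int p dvd c * int b"
    using ac(1) assms(2) prime_p by (simp add: prime_dvd_mult_iff)
  moreover have "x / of_nat b = of_int a / of_int (c * int b)"
    using ac(2) by simp
  ultimately show ?thesis
    unfolding p_integral_def by blast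
qed

lemma p_integral_divide_numeral:
  "p_integral p x \<Longrightarrow> \<not> p dvd numeral b \<Longrightarrow> p_integral p (x / numeral b)"
  using p_integral_divide[of x "numeral b"] by simp

lemma p_integral_inverse_power: "\<not> p dvd k \<Longrightarrow> p_integral p (1 / of_nat k ^ r)"
  using p_integral_divide[of 1 "k ^ r"] prime_dvd_power[OF prime_p] by auto

lemmas p_integral_intros =
  p_integral_add p_integral_diff p_integral_minus p_integral_mult p_integral_power
  p_integral_sum p_integral_of_nat p_integral_numeral p_integral_1

lemma p_integral_bernoulli:
  assumes "Suc n < p"
  shows "p_integral p (bernoulli n)"
proof -
  obtain z where z: "fact (Suc n) * bernoulli n = of_int z"
    using fact_mult_bernoulli_in_Ints Ints_cases by metis
  have "\<not> p dvd fact (Suc n)"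
    using assms by (subst prime_dvd_fact_iff[OF prime_p]) auto
  moreover have "bernoulli n = of_int z / of_nat (fact (Suc n))"
    using z by (simp add: eq_divide_eq mult.commute del: fact_Suc)
  ultimately show ?thesis
    using p_integral_divide[OF p_integral_of_int, of "fact (Suc n)" z] by (simp del: fact_Suc)
qed

lemma not_dvd_denominator_if_p_integral:
  assumes "p_integral p x"
  shows "\<not> int p dvd snd (quotient_of x)"
proof -
  obtain a b where ab: "\<not> int p dvd b" "x = of_int a / of_int b"
    using assms p_integral_def by auto
  obtain c d where cd: "quotient_of x = (c, d)"
    by (cases "quotient_of x")
  have "d > 0" "coprime c d" "x = of_int c / of_int d"
    using cd quotient_of_denom_pos quotient_of_coprime quotient_of_div by blast+
  moreover have "b \<noteq> 0"
    using ab(1) by auto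
  ultimately have "of_int (a * d) = (of_int (c * b) :: rat)"
    using ab(2) by (simp add: frac_eq_eq)
  then have "a * d = c * b"
    by (simp only: of_int_eq_iff)
  then have "d dvd b"
    using \<open>coprime c d\<close> by (metis coprime_commute coprime_dvd_mult_right_iff dvd_triv_right)
  then show ?thesis
    using ab(1) cd dvd_trans by auto
qed

lemma ppow_dvd_0_iff [simp]: "ppow_dvd p 0 x \<longleftrightarrow> p_integral p x"
  unfolding ppow_dvd_def by simp

lemma ppow_dvd_zero [simp]: "ppow_dvd p m 0"
  unfolding ppow_dvd_def by (rule exI[of _ 0]) simp

lemma ppow_dvd_add:
  assumes "ppow_dvd p m x" "ppow_dvd p m y"
  shows "ppow_dvd p m (x + y)"
proof -
  obtain a b where "p_integral p a" "x = of_nat p ^ m * a" "p_integral p b" "y = of_nat p ^ m * b"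
    using assms ppow_dvd_def by auto
  then show ?thesis
    unfolding ppow_dvd_def by (intro exI[of _ "a + b"]) (simp add: p_integral_add distrib_left)
qed

lemma ppow_dvd_minus:
  assumes "ppow_dvd p m x"
  shows "ppow_dvd p m (- x)"
proof -
  obtain y where "p_integral p y" "x = of_nat p ^ m * y"
    using assms ppow_dvd_def by auto
  then show ?thesis
    unfolding ppow_dvd_def by (intro exI[of _ "- y"]) (simp add: p_integral_minus)
qed

lemma ppow_dvd_diff: "ppow_dvd p m x \<Longrightarrow> ppow_dvd p m y \<Longrightarrow> ppow_dvd p m (x - y)"
  using ppow_dvd_add[of m x "- y"] ppow_dvd_minus[of m y] by simp

lemma ppow_dvd_diff_trans:
  "ppow_dvd p m (a - b) \<Longrightarrow> ppow_dvd p m (b - c) \<Longrightarrow> ppow_dvd p m (a - c)"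
  using ppow_dvd_add[of m "a - b" "b - c"] by simp

lemma ppow_dvd_sum: "(\<And>i. i \<in> A \<Longrightarrow> ppow_dvd p m (f i)) \<Longrightarrow> ppow_dvd p m (\<Sum>i\<in>A. f i)"
  by (induction A rule: infinite_finite_induct) (simp_all add: ppow_dvd_add)

lemma ppow_dvd_mono:
  assumes "ppow_dvd p m x" "n \<le> m"
  shows "ppow_dvd p n x"
proof -
  obtain y where y: "p_integral p y" "x = of_nat p ^ m * y"
    using assms(1) ppow_dvd_def by auto
  have "x = of_nat p ^ n * (of_nat p ^ (m - n) * y)"
    using y(2) assms(2) by (simp add: power_add[symmetric])
  moreover have "p_integral p (of_nat p ^ (m - n) * y)"
    using y(1) by (simp add: p_integral_mult p_integral_power)
  ultimately show ?thesis
    unfolding ppow_dvd_def by blast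
qed

lemma ppow_dvd_mult:
  assumes "ppow_dvd p m x" "ppow_dvd p n y" "k \<le> m + n"
  shows "ppow_dvd p k (x * y)"
proof -
  obtain a b where "p_integral p a" "x = of_nat p ^ m * a" "p_integral p b" "y = of_nat p ^ n * b"
    using assms ppow_dvd_def by auto
  then have "ppow_dvd p (m + n) (x * y)"
    unfolding ppow_dvd_def by (intro exI[of _ "a * b"]) (simp add: p_integral_mult power_add)
  then show ?thesis
    using assms(3) ppow_dvd_mono by blast
qed

lemma ppow_dvd_mult_left: "p_integral p c \<Longrightarrow> ppow_dvd p m x \<Longrightarrow> ppow_dvd p m (c * x)"
  using ppow_dvd_mult[of 0 c m x m] by simp

lemma ppow_dvd_mult_right: "ppow_dvd p m x \<Longrightarrow> p_integral p c \<Longrightarrow> ppow_dvd p m (x * c)"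
  using ppow_dvd_mult[of m x 0 c m] by simp

lemma ppow_dvd_power:
  assumes "ppow_dvd p m x"
  shows "ppow_dvd p (j * m) (x ^ j)"
proof (induction j)
  case 0
  show ?case
    by simp
next
  case (Suc j)
  show ?case
    using ppow_dvd_mult[OF assms Suc] by simp
qed

lemma ppow_dvd_power_sum:
  "(\<And>k. k \<in> A \<Longrightarrow> ppow_dvd p 1 (c k)) \<Longrightarrow> ppow_dvd p j (\<Sum>k\<in>A. c k ^ j)"
  using ppow_dvd_power[of 1 "c k" j for k] by (auto intro: ppow_dvd_sum)

lemma ppow_dvd_divide_numeral:
  "ppow_dvd p m x \<Longrightarrow> \<not> p dvd numeral b \<Longrightarrow> ppow_dvd p m (x / numeral b)"
  using ppow_dvd_mult_right[OF _ p_integral_divide_numeral[OF p_integral_1]] by simp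

lemma ppow_dvd_p_power: "ppow_dvd p j (of_nat p ^ j)"
  unfolding ppow_dvd_def by (rule exI[of _ 1]) simp

lemma ppow_dvd_p_power_mult:
  "ppow_dvd p m x \<Longrightarrow> k \<le> j + m \<Longrightarrow> ppow_dvd p k (of_nat p ^ j * x)"
  using ppow_dvd_mult[OF ppow_dvd_p_power] by blast

lemma ppow_dvd_p_mult: "ppow_dvd p m x \<Longrightarrow> k \<le> Suc m \<Longrightarrow> ppow_dvd p k (of_nat p * x)"
  using ppow_dvd_p_power_mult[of m x k 1] by simp

lemma ppow_dvd_cancel_p:
  assumes "ppow_dvd p (Suc m) (of_nat p * x)"
  shows "ppow_dvd p m x"
proof -
  obtain y where "p_integral p y" "of_nat p * x = of_nat p ^ Suc m * y"
    using assms ppow_dvd_def by auto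
  moreover have "p \<noteq> 0"
    using prime_p by auto
  ultimately have "x = of_nat p ^ m * y"
    by (simp add: mult.assoc)
  then show ?thesis
    unfolding ppow_dvd_def using \<open>p_integral p y\<close> by blast
qed

lemma ppow_dvd_of_int:
  assumes "int p ^ m dvd z"
  shows "ppow_dvd p m (of_int z)"
proof -
  obtain w where "z = int p ^ m * w"
    using assms by blast
  then show ?thesis
    unfolding ppow_dvd_def by (intro exI[of _ "of_int w"]) simp
qed

lemma ppow_dvd_mult_cong:
  assumes "ppow_dvd p m (u - a)" "ppow_dvd p m (v - b)" "p_integral p a" "p_integral p b"
  shows "ppow_dvd p m (u * v - a * b)"
proof -
  have "p_integral p v"
    using ppow_dvd_mono[OF assms(2), of 0] assms(4) p_integral_add[of "v - b" b] by simp
  then have "ppow_dvd p m ((u - a) * v + a * (v - b))"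
    using assms by (intro ppow_dvd_add ppow_dvd_mult_right ppow_dvd_mult_left)
  then show ?thesis
    by (simp add: algebra_simps)
qed

lemma rat_cong_pow_if_ppow_dvd:
  assumes "ppow_dvd p m (a - b)"
  shows "rat_cong_pow a b p m"
proof -
  obtain y where "p_integral p y" "a - b = of_nat p ^ m * y"
    using assms ppow_dvd_def by auto
  moreover have "p \<noteq> 0"
    using prime_p by auto
  ultimately have "(a - b) / of_nat p ^ m = y"
    by simp
  then show ?thesis
    unfolding rat_cong_pow_def using not_dvd_denominator_if_p_integral \<open>p_integral p y\<close> by simp
qed

section \<open>Power sums modulo powers of p\<close>

lemma sum_powers_cong_bernoulli:
  assumes "Suc m < p"
  shows "ppow_dvd p 2 ((\<Sum>k<p. of_nat k ^ m) - of_nat p * bernoulli m)"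
proof -
  define R where "R = (\<Sum>j<m. of_nat p ^ (Suc m - j) * (of_nat (Suc m choose j) * bernoulli j))"
  have "of_nat (Suc m) * ((\<Sum>k<p. of_nat k ^ m) - of_nat p * bernoulli m) = R"
    using sum_powers_bernoulli[of m p]
    by (simp add: R_def lessThan_Suc_atMost[symmetric] algebra_simps)
  then have eq: "(\<Sum>k<p. of_nat k ^ m) - of_nat p * bernoulli m = 1 / of_nat (Suc m) * R"
    by (simp add: field_simps del: of_nat_Suc)
  have "ppow_dvd p 2 R"
    unfolding R_def using assms
    by (intro ppow_dvd_sum ppow_dvd_p_power_mult[of 0])
      (auto intro!: p_integral_mult p_integral_bernoulli)
  moreover have "p_integral p (1 / of_nat (Suc m))"
    using assms by (intro p_integral_divide) (auto dest: dvd_imp_le)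
  ultimately show ?thesis
    unfolding eq by (intro ppow_dvd_mult_left)
qed

lemma power_diff_p_cong:
  assumes "p_integral p a"
  shows "ppow_dvd p 2 ((a - of_nat p) ^ Suc n - (a ^ Suc n - of_nat (Suc n) * a ^ n * of_nat p))"
proof (induction n)
  case 0
  show ?case
    by simp
next
  case (Suc n)
  have "(a - of_nat p) ^ Suc (Suc n) - (a ^ Suc (Suc n) - of_nat (Suc (Suc n)) * a ^ Suc n * of_nat p)
      = (a - of_nat p) * ((a - of_nat p) ^ Suc n - (a ^ Suc n - of_nat (Suc n) * a ^ n * of_nat p))
        + of_nat p ^ 2 * (of_nat (Suc n) * a ^ n)"
    by (simp add: algebra_simps power2_eq_square)
  moreover have "ppow_dvd p 2 ((a - of_nat p) * ((a - of_nat p) ^ Suc n - (a ^ Suc n - of_nat (Suc n) * a ^ n * of_nat p)))"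
    using assms by (intro ppow_dvd_mult_left[OF _ Suc] p_integral_intros) simp_all
  moreover have "ppow_dvd p 2 (of_nat p ^ 2 * (of_nat (Suc n) * a ^ n))"
    using assms by (intro ppow_dvd_p_power_mult[of 0]) (simp_all add: p_integral_intros)
  ultimately show ?case
    using ppow_dvd_add by simp
qed

lemma fermat_ppow_dvd:
  assumes "\<not> p dvd k"
  shows "ppow_dvd p 1 (of_nat k ^ (p - 1) - 1)"
proof -
  have "[int k ^ (p - 1) = 1] (mod int p)"
    using fermat_theorem[OF prime_p assms] by (metis cong_int_iff of_nat_1 of_nat_power)
  then have "int p ^ 1 dvd int k ^ (p - 1) - 1"
    by (simp add: cong_iff_dvd_diff)
  then show ?thesis
    using ppow_dvd_of_int by fastforce
qed

lemma sum_powers_doubling_cong: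
  assumes "odd p"
  shows "ppow_dvd p 2 ((2 ^ Suc n - 1) * (\<Sum>k\<in>{1..<p}. of_nat k ^ Suc n)
           - of_nat (Suc n) * 2 ^ n * of_nat p * (\<Sum>k\<in>{p div 2<..<p}. of_nat k ^ n))"
proof -
  define h where "h = p div 2"
  define S where "S = (\<Sum>k\<in>{1..<p}. of_nat k ^ Suc n :: rat)"
  define U where "U = (\<Sum>k\<in>{h<..<p}. of_nat k ^ n :: rat)"
  define low where "low = (\<Sum>k\<in>{1..h}. of_nat (2 * k) ^ Suc n :: rat)"
  define high where "high = (\<Sum>k\<in>{h<..<p}. of_nat (2 * k) ^ Suc n :: rat)"
  define C where "C = (\<Sum>k\<in>{h<..<p}. (of_nat (2 * k) - of_nat p :: rat) ^ Suc n)"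
  \<comment> \<open>2^(n+1) S is the sum of all (2k)^(n+1), while the odd half of S consists of the
    terms (2k - p)^(n+1) = (2k)^(n+1) - (n+1) (2k)^n p (mod p^2).\<close>
  define D where "D k = (of_nat (2 * k) - of_nat p :: rat) ^ Suc n
                          - (of_nat (2 * k) ^ Suc n - of_nat (Suc n) * of_nat (2 * k) ^ n * of_nat p)"
    for k :: nat
  have "S = low + (\<Sum>k\<in>{h<..<p}. of_nat (2 * k - p) ^ Suc n)"
    unfolding S_def low_def h_def by (rule sum_odd_range_by_halves[OF assms])
  also have "(\<Sum>k\<in>{h<..<p}. of_nat (2 * k - p) ^ Suc n) = C"
    unfolding C_def using assms by (intro sum.cong) (auto simp: h_def of_nat_diff)
  finally have halves: "S = low + C" .
  have "{1..<p} = {1..h} \<union> {h<..<p}" "{1..h} \<inter> {h<..<p} = {}"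
    using assms by (auto simp: h_def)
  then have doubled: "2 ^ Suc n * S = low + high"
    unfolding S_def low_def high_def
    by (simp add: sum_distrib_left power_mult_distrib sum.union_disjoint distrib_left mult_ac)
  have "(\<Sum>k\<in>{h<..<p}. D k) = C - high + of_nat (Suc n) * 2 ^ n * of_nat p * U"
    unfolding D_def C_def high_def U_def
    by (simp add: sum_subtractf sum.distrib sum_distrib_left power_mult_distrib mult_ac)
  moreover have "(2 ^ Suc n - 1) * S = 2 ^ Suc n * S - S"
    by (simp add: left_diff_distrib)
  ultimately have "(2 ^ Suc n - 1) * S - of_nat (Suc n) * 2 ^ n * of_nat p * U = - (\<Sum>k\<in>{h<..<p}. D k)"
    using halves doubled by linarith
  moreover have "ppow_dvd p 2 (\<Sum>k\<in>{h<..<p}. D k)"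
    unfolding D_def
    by (intro ppow_dvd_sum power_diff_p_cong) (auto intro: p_integral_intros)
  ultimately show ?thesis
    unfolding S_def U_def h_def by (metis ppow_dvd_minus)
qed

context
  assumes p_gt_3: "3 < p"
begin

lemma odd_p: "odd p"
  using prime_p p_gt_3 prime_odd_nat by auto

lemma not_dvd_2_3_6: "\<not> p dvd 2" "\<not> p dvd 3" "\<not> p dvd 6"
proof -
  show "\<not> p dvd 2" "\<not> p dvd 3"
    using p_gt_3 by (auto dest: dvd_imp_le)
  then show "\<not> p dvd 6"
    using prime_dvd_mult_iff[OF prime_p, of 2 3] by simp
qed

lemma p_integral_inverse_power_less: "k \<in> {1..<p} \<Longrightarrow> p_integral p (1 / of_nat k ^ r)"
  by (intro p_integral_inverse_power) (auto dest: dvd_imp_le)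

lemma upper_half_power_sum_cong:
  "ppow_dvd p 1 ((\<Sum>k\<in>{p div 2<..<p}. of_nat k ^ (p - 4)) - 2 * bernoulli (p - 3))"
proof -
  define n where "n = p - 4"
  define S where "S = (\<Sum>k\<in>{1..<p}. of_nat k ^ Suc n :: rat)"
  define U where "U = (\<Sum>k\<in>{p div 2<..<p}. of_nat k ^ n :: rat)"
  define B where "B = bernoulli (Suc n)"
  define E where "E = (2 ^ Suc n - 1) * B - of_nat (Suc n) * 2 ^ n * U"
  have n: "p = n + 4"
    using odd_p p_gt_3 unfolding n_def by presburger
  have "(\<Sum>k<p. of_nat k ^ Suc n :: rat) = S"
    unfolding S_def using p_gt_3 by (simp add: atLeast0LessThan[symmetric] sum.atLeast_Suc_lessThan)
  then have SB: "ppow_dvd p 2 (S - of_nat p * B)"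
    using sum_powers_cong_bernoulli[of "Suc n"] n unfolding B_def by simp
  have "ppow_dvd p 2 ((2 ^ Suc n - 1) * S - of_nat (Suc n) * 2 ^ n * of_nat p * U)"
    using sum_powers_doubling_cong[OF odd_p, of n] unfolding S_def U_def .
  then have "ppow_dvd p 2 (((2 ^ Suc n - 1) * S - of_nat (Suc n) * 2 ^ n * of_nat p * U)
                           - (2 ^ Suc n - 1) * (S - of_nat p * B))"
    by (rule ppow_dvd_diff[OF _ ppow_dvd_mult_left[OF _ SB]])
      (simp add: p_integral_intros)
  then have "ppow_dvd p 2 (of_nat p * E)"
    by (simp add: E_def algebra_simps)
  then have E: "ppow_dvd p 1 E"
    using ppow_dvd_cancel_p[of 1] by (simp add: numeral_2_eq_2)
  have F: "ppow_dvd p 1 (2 ^ (n + 3) - 1)"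
    using fermat_ppow_dvd[OF not_dvd_2_3_6(1)] n by (simp add: add.commute)
  \<comment> \<open>Modulo p we have 2^(n+3) = 2^(p-1) = 1 and n + 1 = -3, so E is (3U - 6B)/8.\<close>
  have "3 * U - 6 * B = 8 * E - (2 ^ (n + 3) - 1) * (2 * B - of_nat (Suc n) * U) + of_nat p * U"
    unfolding E_def n by (simp add: algebra_simps power_add)
  moreover have "p_integral p B" "p_integral p U"
    unfolding B_def U_def using p_gt_3 by (auto simp: n_def intro!: p_integral_intros p_integral_bernoulli)
  then have "ppow_dvd p 1 (8 * E - (2 ^ (n + 3) - 1) * (2 * B - of_nat (Suc n) * U) + of_nat p * U)"
    by (intro ppow_dvd_add ppow_dvd_diff ppow_dvd_mult_left[OF _ E] ppow_dvd_mult_right[OF F]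
        ppow_dvd_p_mult[of 0]) (simp_all add: p_integral_intros)
  ultimately have "ppow_dvd p 1 (1 / 3 * (3 * U - 6 * B))"
    using p_integral_divide_numeral[OF p_integral_1 not_dvd_2_3_6(2)]
    by (intro ppow_dvd_mult_left) simp_all
  then show ?thesis
    unfolding U_def B_def n by (simp add: algebra_simps)
qed

lemma upper_half_inverse_cube_sum_cong:
  "ppow_dvd p 1 ((\<Sum>k\<in>{p div 2<..<p}. 1 / of_nat k ^ 3) - 2 * bernoulli (p - 3))"
proof -
  have "ppow_dvd p 1 (\<Sum>k\<in>{p div 2<..<p}. 1 / of_nat k ^ 3 - of_nat k ^ (p - 4))"
  proof (intro ppow_dvd_sum)
    fix k assume k: "k \<in> {p div 2<..<p}"
    have p: "p - 1 = (p - 4) + 3"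
      using p_gt_3 by simp
    have "(of_nat k :: rat) \<noteq> 0"
      using k by auto
    then have "1 / of_nat k ^ 3 - of_nat k ^ (p - 4) = - ((of_nat k ^ (p - 1) - 1) * (1 / of_nat k ^ 3) :: rat)"
      unfolding p by (simp add: field_simps power_add)
    moreover have "\<not> p dvd k"
      using k by (auto dest: dvd_imp_le)
    then have "ppow_dvd p 1 ((of_nat k ^ (p - 1) - 1) * (1 / of_nat k ^ 3))"
      by (intro ppow_dvd_mult_right[OF fermat_ppow_dvd] p_integral_inverse_power)
    ultimately show "ppow_dvd p 1 (1 / of_nat k ^ 3 - of_nat k ^ (p - 4))"
      using ppow_dvd_minus by simp
  qed
  then have "ppow_dvd p 1 ((\<Sum>k\<in>{p div 2<..<p}. 1 / of_nat k ^ 3 - of_nat k ^ (p - 4))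
      + ((\<Sum>k\<in>{p div 2<..<p}. of_nat k ^ (p - 4)) - 2 * bernoulli (p - 3)))"
    by (rule ppow_dvd_add[OF _ upper_half_power_sum_cong])
  then show ?thesis
    by (simp add: sum_subtractf)
qed

lemma inv_power_sum_3_cong: "ppow_dvd p 1 (inv_power_sum p 3)"
proof -
  have pair: "1 / x ^ 3 + 1 / y ^ 3
      = (x + y) * (((x + y) ^ 2 - 3 * (x + y) * x + 3 * x ^ 2) * (1 / x ^ 3) * (1 / y ^ 3))"
    if "x \<noteq> 0" "y \<noteq> 0" for x y :: rat
    using that by (simp add: field_simps power2_eq_square power3_eq_cube) algebra
  have "ppow_dvd p 1 (2 * inv_power_sum p 3)"
    unfolding inv_power_sum_reflect
  proof (intro ppow_dvd_sum)
    fix k assume k: "k \<in> {1..<p}"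
    then have k': "p - k \<in> {1..<p}" and p: "of_nat k + of_nat (p - k) = (of_nat p :: rat)"
      by (auto simp flip: of_nat_add)
    have "(of_nat k :: rat) \<noteq> 0" "(of_nat (p - k) :: rat) \<noteq> 0"
      using k k' by auto
    note eq = pair[OF this, unfolded p]
    have "p_integral p ((of_nat p ^ 2 - 3 * of_nat p * of_nat k + 3 * of_nat k ^ 2)
        * (1 / of_nat k ^ 3) * (1 / of_nat (p - k) ^ 3))"
      using k k' by (intro p_integral_intros p_integral_inverse_power_less)
    then show "ppow_dvd p 1 (1 / of_nat k ^ 3 + 1 / of_nat (p - k) ^ 3)"
      unfolding eq by (intro ppow_dvd_p_mult[of 0]) simp_all
  qed
  then have "ppow_dvd p 1 (1 / 2 * (2 * inv_power_sum p 3))"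
    by (rule ppow_dvd_mult_left[rotated])
      (simp add: p_integral_divide_numeral not_dvd_2_3_6)
  then show ?thesis
    by simp
qed

lemma inv_power_sum_1_cong: "ppow_dvd p 3 (2 * inv_power_sum p 1 + of_nat p * inv_power_sum p 2)"
proof -
  define R where "R = (\<Sum>k\<in>{1..<p}. 1 / of_nat k ^ 3 * (1 / of_nat (p - k)) :: rat)"
  have pair: "1 / x + 1 / y
      = - (x + y) * (1 / x ^ 2) - (x + y) ^ 2 * (1 / x ^ 3) + (x + y) ^ 3 * (1 / x ^ 3 * (1 / y))"
    if "x \<noteq> 0" "y \<noteq> 0" for x y :: rat
    using that by (simp add: field_simps power2_eq_square power3_eq_cube) algebra
  have "2 * inv_power_sum p 1 = (\<Sum>k\<in>{1..<p}. - of_nat p * (1 / of_nat k ^ 2)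
      - of_nat p ^ 2 * (1 / of_nat k ^ 3) + of_nat p ^ 3 * (1 / of_nat k ^ 3 * (1 / of_nat (p - k))))"
    unfolding inv_power_sum_reflect
    using pair[of "of_nat k" "of_nat (p - k)" for k] by (intro sum.cong) (auto simp flip: of_nat_add)
  also have "\<dots> = - of_nat p * inv_power_sum p 2 - of_nat p ^ 2 * inv_power_sum p 3 + of_nat p ^ 3 * R"
    unfolding inv_power_sum_def R_def by (simp add: sum.distrib sum_subtractf sum_distrib_left sum_negf)
  finally have eq: "2 * inv_power_sum p 1 + of_nat p * inv_power_sum p 2
      = of_nat p ^ 3 * R - of_nat p ^ 2 * inv_power_sum p 3"
    by simp
  have "p_integral p R"
    unfolding R_def
  proof (intro p_integral_sum p_integral_mult)
    fix k assume k: "k \<in> {1..<p}"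
    then show "p_integral p (1 / of_nat k ^ 3)"
      by (rule p_integral_inverse_power_less)
    have "p - k \<in> {1..<p}"
      using k by auto
    from p_integral_inverse_power_less[OF this, of 1] show "p_integral p (1 / of_nat (p - k))"
      by simp
  qed
  then have "ppow_dvd p 3 (of_nat p ^ 3 * R)"
    by (intro ppow_dvd_p_power_mult[of 0]) simp_all
  moreover have "ppow_dvd p 3 (of_nat p ^ 2 * inv_power_sum p 3)"
    by (rule ppow_dvd_p_power_mult[OF inv_power_sum_3_cong]) simp
  ultimately show ?thesis
    unfolding eq by (rule ppow_dvd_diff)
qed

lemma inv_power_sum_2_cong: "ppow_dvd p 2 (3 * inv_power_sum p 2 - 2 * of_nat p * bernoulli (p - 3))"
proof -
  define T where "T = (\<Sum>k\<in>{p div 2<..<p}. 1 / of_nat k ^ 3 :: rat)"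
  define R where "R = (\<Sum>k\<in>{p div 2<..<p}. (of_nat k + of_nat (2 * k - p)) * (1 / of_nat k ^ 3)
                                              * (1 / of_nat (2 * k - p) ^ 2) :: rat)"
  have eq: "3 * inv_power_sum p 2 - 2 * of_nat p * bernoulli (p - 3)
      = of_nat p * (T - 2 * bernoulli (p - 3)) + of_nat p ^ 2 * R"
    using inv_power_sum_2_halves[OF odd_p] unfolding T_def R_def by (simp add: algebra_simps)
  have "p_integral p R"
    unfolding R_def
  proof (intro p_integral_sum p_integral_mult)
    fix k assume k: "k \<in> {p div 2<..<p}"
    then have "k \<in> {1..<p}" "2 * k - p \<in> {1..<p}"
      using odd_p by auto
    then show "p_integral p (1 / of_nat k ^ 3)" "p_integral p (1 / of_nat (2 * k - p) ^ 2)"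
      by (auto intro: p_integral_inverse_power_less)
  qed (simp_all add: p_integral_add)
  then show ?thesis
    unfolding eq using upper_half_inverse_cube_sum_cong
    by (intro ppow_dvd_add ppow_dvd_p_mult ppow_dvd_p_power_mult[of 0]) (auto simp: T_def)
qed

lemma inv_power_sum_2_in_p: "ppow_dvd p 1 (inv_power_sum p 2)"
proof -
  have "ppow_dvd p 1 ((3 * inv_power_sum p 2 - 2 * of_nat p * bernoulli (p - 3))
      + of_nat p * (2 * bernoulli (p - 3)))"
    using ppow_dvd_mono[OF inv_power_sum_2_cong, of 1] p_gt_3
    by (intro ppow_dvd_add ppow_dvd_p_mult[of 0])
      (auto intro!: p_integral_intros p_integral_bernoulli)
  then have "ppow_dvd p 1 (3 * inv_power_sum p 2)"
    by simp
  from ppow_dvd_divide_numeral[OF this not_dvd_2_3_6(2)] show ?thesis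
    by simp
qed

lemma inv_power_sum_1_in_p2: "ppow_dvd p 2 (inv_power_sum p 1)"
proof -
  have "ppow_dvd p 2 ((2 * inv_power_sum p 1 + of_nat p * inv_power_sum p 2) - of_nat p * inv_power_sum p 2)"
    using ppow_dvd_mono[OF inv_power_sum_1_cong, of 2]
    by (intro ppow_dvd_diff ppow_dvd_p_mult[OF inv_power_sum_2_in_p]) simp_all
  then have "ppow_dvd p 2 (2 * inv_power_sum p 1)"
    by simp
  from ppow_dvd_divide_numeral[OF this not_dvd_2_3_6(1)] show ?thesis
    by simp
qed

section \<open>Products modulo p^4\<close>

lemma prod_one_plus_cong:
  assumes "finite A" "\<And>k. k \<in> A \<Longrightarrow> ppow_dvd p 1 (c k)"
  shows "ppow_dvd p 4 ((\<Prod>k\<in>A. 1 + c k) - esym_upto_3 (\<Sum>k\<in>A. c k) (\<Sum>k\<in>A. c k ^ 2) (\<Sum>k\<in>A. c k ^ 3))"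
  using assms
proof (induction A rule: finite_induct)
  case empty
  show ?case
    by (simp add: esym_upto_3_def)
next
  case (insert a A)
  define s where "s j = (\<Sum>k\<in>A. c k ^ j)" for j
  have c: "ppow_dvd p 1 (c k)" if "k \<in> insert a A" for k
    using insert.prems that by blast
  then have s: "ppow_dvd p j (s j)" for j
    unfolding s_def by (auto intro: ppow_dvd_power_sum)
  have "ppow_dvd p 3 (s 1 ^ 3)"
    using ppow_dvd_power[OF s[of 1], of 3] by simp
  moreover have "ppow_dvd p 3 (s 1 * s 2)"
    by (rule ppow_dvd_mult[OF s[of 1] s[of 2]]) simp
  ultimately have "ppow_dvd p 3 ((s 1 ^ 3 - 3 * s 1 * s 2 + 2 * s 3) / 6)"
    using s[of 3] not_dvd_2_3_6
    by (intro ppow_dvd_divide_numeral ppow_dvd_add ppow_dvd_diff) (auto simp: mult.assoc intro: ppow_dvd_mult_left)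
  then have "ppow_dvd p 4 (c a * ((s 1 ^ 3 - 3 * s 1 * s 2 + 2 * s 3) / 6))"
    using c[of a] by (intro ppow_dvd_mult[of 1 _ 3]) simp_all
  moreover have "p_integral p (c a)"
    using ppow_dvd_mono[OF c[of a], of 0] by simp
  then have "ppow_dvd p 4 ((1 + c a) * ((\<Prod>k\<in>A. 1 + c k) - esym_upto_3 (s 1) (s 2) (s 3)))"
    using insert c unfolding s_def by (intro ppow_dvd_mult_left p_integral_add) auto
  moreover have sums: "(\<Sum>k\<in>insert a A. c k) = c a + s 1" "(\<Sum>k\<in>insert a A. c k ^ 2) = c a ^ 2 + s 2"
    "(\<Sum>k\<in>insert a A. c k ^ 3) = c a ^ 3 + s 3" "(\<Prod>k\<in>insert a A. 1 + c k) = (1 + c a) * (\<Prod>k\<in>A. 1 + c k)"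
    using insert(1,2) by (simp_all add: s_def)
  have "(\<Prod>k\<in>insert a A. 1 + c k) - esym_upto_3 (\<Sum>k\<in>insert a A. c k) (\<Sum>k\<in>insert a A. c k ^ 2)
        (\<Sum>k\<in>insert a A. c k ^ 3)
      = (1 + c a) * ((\<Prod>k\<in>A. 1 + c k) - esym_upto_3 (s 1) (s 2) (s 3))
        + c a * ((s 1 ^ 3 - 3 * s 1 * s 2 + 2 * s 3) / 6)"
    unfolding sums esym_upto_3_insert by (simp add: algebra_simps)
  ultimately show ?case
    using ppow_dvd_add by simp
qed

lemma esym_upto_3_inv_power_sums_cong:
  assumes "ppow_dvd p 1 x"
  defines "H r \<equiv> inv_power_sum p r"
  shows "ppow_dvd p 4 (esym_upto_3 (- x * H 1) (x ^ 2 * H 2) (- (x ^ 3) * H 3)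
           - (1 - x * H 1 - x ^ 2 * H 2 / 2))"
proof -
  have xH1: "ppow_dvd p 3 (x * H 1)"
    using assms(1) inv_power_sum_1_in_p2 unfolding H_def by (rule ppow_dvd_mult) simp
  have x2H2: "ppow_dvd p 3 (x ^ 2 * H 2)"
    unfolding H_def by (rule ppow_dvd_mult[OF ppow_dvd_power[OF assms(1)] inv_power_sum_2_in_p]) simp
  have "ppow_dvd p 4 ((x * H 1) ^ 2)" "ppow_dvd p 4 ((x * H 1) ^ 3)"
    using ppow_dvd_mono[OF ppow_dvd_power[OF xH1]] by simp_all
  moreover have "ppow_dvd p 4 (3 * (x * H 1) * (x ^ 2 * H 2))"
    unfolding mult.assoc[of 3] by (rule ppow_dvd_mult_left[OF _ ppow_dvd_mult[OF xH1 x2H2]]) simp_all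
  moreover have "ppow_dvd p 4 (2 * (x ^ 3 * H 3))"
    unfolding H_def
    by (rule ppow_dvd_mult_left[OF _ ppow_dvd_mult[OF ppow_dvd_power[OF assms(1)] inv_power_sum_3_cong]])
      simp_all
  ultimately have "ppow_dvd p 4 ((x * H 1) ^ 2 / 2
      + (- ((x * H 1) ^ 3) + 3 * (x * H 1) * (x ^ 2 * H 2) - 2 * (x ^ 3 * H 3)) / 6)"
    using not_dvd_2_3_6 by (intro ppow_dvd_add ppow_dvd_diff ppow_dvd_divide_numeral ppow_dvd_minus) simp_all
  moreover have "(x * H 1) ^ 2 / 2 + (- ((x * H 1) ^ 3) + 3 * (x * H 1) * (x ^ 2 * H 2) - 2 * (x ^ 3 * H 3)) / 6
      = esym_upto_3 (- x * H 1) (x ^ 2 * H 2) (- (x ^ 3) * H 3) - (1 - x * H 1 - x ^ 2 * H 2 / 2)"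
    by (simp add: esym_upto_3_def field_simps power2_eq_square power3_eq_cube)
  ultimately show ?thesis
    by simp
qed

lemma prod_one_minus_inverse_cong:
  assumes "ppow_dvd p 1 x"
  shows "ppow_dvd p 4 ((\<Prod>k\<in>{1..<p}. 1 - x / of_nat k)
           - (1 - x * inv_power_sum p 1 - x ^ 2 * inv_power_sum p 2 / 2))"
proof -
  have "(\<Sum>k\<in>{1..<p}. - x / of_nat k) = - x * inv_power_sum p 1"
    "(\<Sum>k\<in>{1..<p}. (- x / of_nat k) ^ 2) = x ^ 2 * inv_power_sum p 2"
    "(\<Sum>k\<in>{1..<p}. (- x / of_nat k) ^ 3) = - (x ^ 3) * inv_power_sum p 3"
    by (simp_all add: inv_power_sum_def sum_distrib_left power_divide sum_negf)
  moreover have "ppow_dvd p 4 ((\<Prod>k\<in>{1..<p}. 1 + - x / of_nat k)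
      - esym_upto_3 (\<Sum>k\<in>{1..<p}. - x / of_nat k) (\<Sum>k\<in>{1..<p}. (- x / of_nat k) ^ 2)
          (\<Sum>k\<in>{1..<p}. (- x / of_nat k) ^ 3))"
  proof (rule prod_one_plus_cong)
    fix k assume "k \<in> {1..<p}"
    from p_integral_inverse_power_less[OF this, of 1]
    have "ppow_dvd p 1 (- (x * (1 / of_nat k)))"
      by (intro ppow_dvd_minus ppow_dvd_mult_right[OF assms]) simp
    then show "ppow_dvd p 1 (- x / of_nat k)"
      by simp
  qed simp
  ultimately have "ppow_dvd p 4 ((\<Prod>k\<in>{1..<p}. 1 - x / of_nat k)
      - esym_upto_3 (- x * inv_power_sum p 1) (x ^ 2 * inv_power_sum p 2) (- (x ^ 3) * inv_power_sum p 3))"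
    by simp
  then show ?thesis
    using esym_upto_3_inv_power_sums_cong[OF assms] by (rule ppow_dvd_diff_trans)
qed

lemma prod_one_minus_p_mult_cong:
  assumes "p_integral p t"
  shows "ppow_dvd p 4 ((\<Prod>k\<in>{1..<p}. 1 - t * of_nat p / of_nat k)
           - (1 + t * (1 - t) / 3 * of_nat p ^ 3 * bernoulli (p - 3)))"
proof -
  define H where "H r = inv_power_sum p r" for r
  define B where "B = bernoulli (p - 3)"
  have "ppow_dvd p 1 (t * of_nat p)"
    using ppow_dvd_p_mult[of 0 t 1] assms by (simp add: mult.commute)
  then have prod: "ppow_dvd p 4 ((\<Prod>k\<in>{1..<p}. 1 - t * of_nat p / of_nat k)
      - (1 - t * of_nat p * H 1 - (t * of_nat p) ^ 2 * H 2 / 2))"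
    unfolding H_def by (rule prod_one_minus_inverse_cong)
  have "(1 - t * of_nat p * H 1 - (t * of_nat p) ^ 2 * H 2 / 2) - (1 + t * (1 - t) / 3 * of_nat p ^ 3 * B)
      = - (t / 2 * (of_nat p * (2 * H 1 + of_nat p * H 2)))
        + t * (1 - t) / 6 * (of_nat p ^ 2 * (3 * H 2 - 2 * of_nat p * B))"
    by (simp add: field_simps power2_eq_square power3_eq_cube)
  moreover have "ppow_dvd p 4 \<dots>"
    using assms not_dvd_2_3_6 unfolding H_def B_def
    by (intro ppow_dvd_add ppow_dvd_minus ppow_dvd_mult_left
        ppow_dvd_p_mult[OF inv_power_sum_1_cong]
        ppow_dvd_p_power_mult[OF inv_power_sum_2_cong]
        p_integral_divide_numeral) (auto intro: p_integral_intros)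
  ultimately have "ppow_dvd p 4 ((1 - t * of_nat p * H 1 - (t * of_nat p) ^ 2 * H 2 / 2)
      - (1 + t * (1 - t) / 3 * of_nat p ^ 3 * B))"
    by simp
  with prod show ?thesis
    unfolding B_def by (rule ppow_dvd_diff_trans)
qed

lemma prod_half_times_prod_two_cong:
  "ppow_dvd p 4 ((\<Prod>k\<in>{1..<p}. 1 - 1 / 2 * of_nat p / of_nat k) * (\<Prod>k\<in>{1..<p}. 1 - 2 * of_nat p / of_nat k)
                  - (1 - 7 / 12 * of_nat p ^ 3 * bernoulli (p - 3)))"
proof -
  define B where "B = bernoulli (p - 3)"
  define c where "c t = 1 + t * (1 - t) / 3 * of_nat p ^ 3 * B" for t
  have B: "p_integral p B"
    unfolding B_def using p_gt_3 by (intro p_integral_bernoulli) auto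
  have c: "p_integral p (c t)" if "p_integral p t" for t
    unfolding c_def using that B not_dvd_2_3_6
    by (intro p_integral_intros p_integral_divide_numeral) simp_all
  have half: "p_integral p (1 / 2)"
    using not_dvd_2_3_6 by (intro p_integral_divide_numeral) simp_all
  have prod: "ppow_dvd p 4 ((\<Prod>k\<in>{1..<p}. 1 - 1 / 2 * of_nat p / of_nat k) * (\<Prod>k\<in>{1..<p}. 1 - 2 * of_nat p / of_nat k)
      - c (1 / 2) * c 2)"
    using prod_one_minus_p_mult_cong[OF half] prod_one_minus_p_mult_cong[of 2]
      c[OF half] c[of 2]
    unfolding c_def B_def by (intro ppow_dvd_mult_cong) simp_all
  have "c (1 / 2) * c 2 - (1 - 7 / 12 * of_nat p ^ 3 * B) = of_nat p ^ 6 * (- (B / 6) * (B / 3))"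
    unfolding c_def by (simp add: field_simps power2_eq_square)
  moreover have "p_integral p (- (B / 6) * (B / 3))"
    using B not_dvd_2_3_6
    by (intro p_integral_intros p_integral_divide_numeral) simp_all
  then have "ppow_dvd p 4 (of_nat p ^ 6 * (- (B / 6) * (B / 3)))"
    by (intro ppow_dvd_p_power_mult[of 0]) simp_all
  ultimately have "ppow_dvd p 4 (c (1 / 2) * c 2 - (1 - 7 / 12 * of_nat p ^ 3 * B))"
    by simp
  then show ?thesis
    unfolding B_def by (rule ppow_dvd_diff_trans[OF prod])
qed

end

end

theorem mainTheorem14:
  fixes p :: nat
  assumes "prime p" and "p > 3"
  shows "rat_cong_pow
           (((of_nat p / 2 - 1 :: rat) gchoose (p - 1)) * of_nat ((2 * p - 1) choose (p - 1)))
           (1 - 7 / 12 * (of_nat p) ^ 3 * bernoulli (p - 3)) p 4"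
  using prod_half_times_prod_two_cong[OF assms] binomial_product_eq_prod[of p] assms
  by (intro rat_cong_pow_if_ppow_dvd[OF assms(1)]) simp

end
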